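(* Let $s\in[0,1]$, $\tau\in(0,1)$, and let $I$ be a $\tau$-bounded simultaneous offering instance with $\sum_{i\in V_{\mathrm{high}}}p_i\le k$. Then $$R_{\mathsf{ALG}^s_{\mathtt{sim}}}(I)\ \ge\ \Big(s-\frac{s}{\tau}+\frac{\mathbb{E}[\min\{\mathrm{Pois}(sk),k\}]}{\tau k}\Big)\mathrm{LP}_{\mathtt{sim}}(I).$$
   Context: Simultaneous offering problem: integers $1\le k\le n$; candidates $i\in[n]$ with acceptance probabilities $p_i\in[0,1]$ and values $v_i\ge0$, labeled so that $v_1\ge\cdots\ge v_n$. A policy chooses a (possibly random) set $S$ of candidates who all receive offers at once; each accepts independently with probability $p_i$; with $A$ the acceptors the reward is $\sum_{i\in A}v_i-\max\{|A|-k,0\}$; $R_\pi(I)$ is expected reward. The instance is $\tau$-bounded if $v_i\ge\tau$ for all $i$. $V_{\mathrm{high}}=\{i:v_i>1\}$. $\mathrm{LP}_{\mathtt{sim}}(I)$: maximize $\sum_iv_ip_iy_i+z$ s.t. $z\le k-\sum_ip_iy_i$, $z\le0$, $0\le y_i\le1$. Policy $\mathsf{ALG}^s_{\mathtt{sim}}$: take an optimal solution $y$ of $\mathrm{LP}_{\mathtt{sim}}(I)$ of prefix form ($y_i=1$ for $i<j$, $y_i=0$ for $i>j$ for some $j$) whose total mass is $\min\{k,\sum_ip_i\}$ if $\sum_{i\in V_{\mathrm{high}}}p_i\le k$ and $\sum_{i\in V_{\mathrm{high}}}p_i$ otherwise; set $\kappa=s\sum_iy_ip_i$; let $y'$ be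 a vector of the form $(1,\dots,1,\theta,0,\dots,0)$ with $\theta\in[0,1]$ and $\sum_iy'_ip_i=\kappa$; then send an offer to each candidate $i$ independently with probability $y'_i$. $\mathrm{Pois}(\lambda)$ is a Poisson random variable with mean $\lambda$. *)

theory Defs
  imports "HOL-Analysis.Analysis"
begin

text \<open>Candidates are indexed by {1..n}; p i, v i are acceptance probabilities and values.\<close>

definition valid_instance :: "nat \<Rightarrow> nat \<Rightarrow> (nat \<Rightarrow> real) \<Rightarrow> (nat \<Rightarrow> real) \<Rightarrow> bool" where
  "valid_instance n k p v \<longleftrightarrow> 1 \<le> k \<and> k \<le> n \<and>
     (\<forall>i\<in>{1..n}. 0 \<le> p i \<and> p i \<le> 1 \<and> 0 \<le> v i) \<and>
     (\<forall>i\<in>{1..n}. \<forall>j\<in>{1..n}. i \<le> j \<longrightarrow> v j \<le> v i)"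

definition tau_bounded :: "nat \<Rightarrow> (nat \<Rightarrow> real) \<Rightarrow> real \<Rightarrow> bool" where
  "tau_bounded n v \<tau> \<longleftrightarrow> (\<forall>i\<in>{1..n}. \<tau> \<le> v i)"

definition V_high :: "nat \<Rightarrow> (nat \<Rightarrow> real) \<Rightarrow> nat set" where
  "V_high n v = {i\<in>{1..n}. v i > 1}"

definition reward :: "nat \<Rightarrow> (nat \<Rightarrow> real) \<Rightarrow> nat set \<Rightarrow> real" where
  "reward k v A = (\<Sum>i\<in>A. v i) - max (real (card A) - real k) 0"

definition subset_prob :: "nat \<Rightarrow> (nat \<Rightarrow> real) \<Rightarrow> nat set \<Rightarrow> real" where
  "subset_prob n q S = (\<Prod>i\<in>S. q i) * (\<Prod>i\<in>{1..n} - S. 1 - q i)"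

text \<open>Expected reward of the randomized policy sending an offer to each i independently
  with probability y' i: the offered set S is random, then each i in S accepts
  independently with probability p i.\<close>
definition indep_offer_reward ::
  "nat \<Rightarrow> nat \<Rightarrow> (nat \<Rightarrow> real) \<Rightarrow> (nat \<Rightarrow> real) \<Rightarrow> (nat \<Rightarrow> real) \<Rightarrow> real" where
  "indep_offer_reward n k p v y' =
     (\<Sum>S\<in>Pow {1..n}. subset_prob n y' S *
        (\<Sum>A\<in>Pow S. (\<Prod>i\<in>A. p i) * (\<Prod>i\<in>S - A. 1 - p i) * reward k v A))"

definition LP_feasible :: "nat \<Rightarrow> nat \<Rightarrow> (nat \<Rightarrow> real) \<Rightarrow> (nat \<Rightarrow> real) \<Rightarrow> real \<Rightarrow> bool" where
  "LP_feasible n k p y z \<longleftrightarrow> z \<le> real k - (\<Sum>i=1..n. p i * y i) \<and> z \<le> 0 \<and>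
     (\<forall>i\<in>{1..n}. 0 \<le> y i \<and> y i \<le> 1)"

definition LP_obj :: "nat \<Rightarrow> (nat \<Rightarrow> real) \<Rightarrow> (nat \<Rightarrow> real) \<Rightarrow> (nat \<Rightarrow> real) \<Rightarrow> real \<Rightarrow> real" where
  "LP_obj n p v y z = (\<Sum>i=1..n. v i * p i * y i) + z"

definition LP_sim :: "nat \<Rightarrow> nat \<Rightarrow> (nat \<Rightarrow> real) \<Rightarrow> (nat \<Rightarrow> real) \<Rightarrow> real" where
  "LP_sim n k p v = Sup {LP_obj n p v y z | y z. LP_feasible n k p y z}"

definition prefix_form :: "nat \<Rightarrow> (nat \<Rightarrow> real) \<Rightarrow> bool" where
  "prefix_form n y \<longleftrightarrow> (\<exists>j\<in>{1..n}. (\<forall>i\<in>{1..n}. i < j \<longrightarrow> y i = 1) \<and>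
                                    (\<forall>i\<in>{1..n}. j < i \<longrightarrow> y i = 0))"

definition threshold_form :: "nat \<Rightarrow> (nat \<Rightarrow> real) \<Rightarrow> bool" where
  "threshold_form n y \<longleftrightarrow> (\<exists>j\<in>{1..n}. 0 \<le> y j \<and> y j \<le> 1 \<and>
       (\<forall>i\<in>{1..n}. i < j \<longrightarrow> y i = 1) \<and> (\<forall>i\<in>{1..n}. j < i \<longrightarrow> y i = 0))"

definition target_mass :: "nat \<Rightarrow> nat \<Rightarrow> (nat \<Rightarrow> real) \<Rightarrow> (nat \<Rightarrow> real) \<Rightarrow> real" where
  "target_mass n k p v =
     (if (\<Sum>i\<in>V_high n v. p i) \<le> real k then min (real k) (\<Sum>i=1..n. p i)
      else (\<Sum>i\<in>V_high n v. p i))"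

text \<open>(y, y') is a valid run of the choices made by ALG^s_sim.\<close>
definition ALG_sim_choice ::
  "real \<Rightarrow> nat \<Rightarrow> nat \<Rightarrow> (nat \<Rightarrow> real) \<Rightarrow> (nat \<Rightarrow> real) \<Rightarrow> (nat \<Rightarrow> real) \<Rightarrow> (nat \<Rightarrow> real) \<Rightarrow> bool" where
  "ALG_sim_choice s n k p v y y' \<longleftrightarrow>
     (\<exists>z. LP_feasible n k p y z \<and> LP_obj n p v y z = LP_sim n k p v) \<and>
     prefix_form n y \<and>
     (\<Sum>i=1..n. y i * p i) = target_mass n k p v \<and>
     threshold_form n y' \<and>
     (\<Sum>i=1..n. y' i * p i) = s * (\<Sum>i=1..n. y i * p i)"

text \<open>E[min(Pois(lambda), k)].\<close>
definition exp_min_pois :: "real \<Rightarrow> nat \<Rightarrow> real" where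
  "exp_min_pois lam k = (\<Sum>j. real (min j k) * (lam ^ j / fact j * exp (- lam)))"

end

theory Submission
  imports Defs
begin

text \<open>
  Since the mass \<open>m = \<Sum> y\<^sub>i p\<^sub>i\<close> of the LP solution is at most \<open>k\<close>, its value is
  \<open>W = \<Sum> v\<^sub>i p\<^sub>i y\<^sub>i\<close>, and \<open>\<tau>\<close>-boundedness gives \<open>\<tau> m \<le> W\<close>. Offering with
  probabilities \<open>y'\<close> makes each candidate accept independently with probability
  \<open>Q\<^sub>i = y'\<^sub>i p\<^sub>i\<close>, so the reward is \<open>\<Sum> (v\<^sub>i - 1) Q\<^sub>i + E[min(|A|, k)]\<close> with
  \<open>\<Sum> Q\<^sub>i = s m\<close>. As \<open>y'\<close> is a threshold vector and \<open>v\<close> is decreasing, \<open>\<Sum> v\<^sub>i Q\<^sub>i \<ge> s W\<close>.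
  The function \<open>G(x) = E[min(Pois x, k)]\<close> is concave with \<open>G(0) = 0\<close>, and a sum of
  independent Bernoulli variables of total mean \<open>x\<close> truncated at \<open>k\<close> has expectation
  at least \<open>G(x)\<close>; hence \<open>E[min(|A|, k)] \<ge> G(s m) \<ge> (m/k) G(s k)\<close>. The bound
  \<open>s W - s m + (m/k) G(s k)\<close> exceeds the claimed multiple of \<open>W\<close> by
  \<open>(s - G(s k)/k)(W/\<tau> - m) \<ge> 0\<close>.
\<close>

text \<open>\<open>poisson_less_prob r x = P(Pois x < r)\<close>\<close>

definition poisson_less_prob :: "nat \<Rightarrow> real \<Rightarrow> real" where
  "poisson_less_prob r x = exp (- x) * (\<Sum>j<r. x ^ j / fact j)"

lemma has_real_derivative_exp_partial_sum:
  "((\<lambda>x. \<Sum>j<Suc r. x ^ j / fact j) has_real_derivative (\<Sum>j<r. x ^ j / fact j)) (at x)"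
proof (induction r)
  case 0
  then show ?case by simp
next
  case (Suc r)
  have "real (Suc r) * x ^ r / fact (Suc r) = x ^ r / fact r"
    by (simp add: fact_Suc del: of_nat_Suc)
  with DERIV_cdivide[OF DERIV_pow[of "Suc r" x UNIV], of "fact (Suc r)"]
  have "((\<lambda>x. x ^ Suc r / fact (Suc r)) has_real_derivative x ^ r / fact r) (at x)"
    by simp
  from DERIV_add[OF Suc this] show ?case by simp
qed

lemma has_real_derivative_poisson_less_prob:
  "(poisson_less_prob (Suc r) has_real_derivative - (exp (- x) * x ^ r / fact r)) (at x)"
proof -
  have "((\<lambda>x. exp (- x)) has_real_derivative - exp (- x)) (at x)"
    by (auto intro!: derivative_eq_intros)
  from DERIV_mult[OF this has_real_derivative_exp_partial_sum[of r x]] show ?thesis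
    unfolding poisson_less_prob_def by (simp add: algebra_simps)
qed

lemma poisson_less_prob_antimono:
  assumes "0 \<le> x" "x \<le> y"
  shows "poisson_less_prob r y \<le> poisson_less_prob r x"
proof (cases r)
  case 0
  then show ?thesis by (simp add: poisson_less_prob_def)
next
  case (Suc r')
  show ?thesis
    unfolding Suc using assms has_real_derivative_poisson_less_prob
    by (intro DERIV_nonpos_imp_nonincreasing[OF assms(2)]) force
qed

lemma poisson_less_prob_le_one:
  assumes "0 \<le> x"
  shows "poisson_less_prob r x \<le> 1"
proof -
  have "poisson_less_prob r 0 \<le> 1"
    by (cases r) (simp_all add: poisson_less_prob_def lessThan_Suc_eq_insert_0 sum.reindex)
  with poisson_less_prob_antimono[OF order_refl assms, of r] show ?thesis by simp
qed

lemma exp_min_pois_sums: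
  "(\<lambda>j. real (min j r) * (x ^ j / fact j * exp (- x))) sums exp_min_pois x r"
proof -
  have "summable (\<lambda>j. real r * (\<bar>x\<bar> ^ j / fact j * exp (- x)))"
    using exp_converges[of "\<bar>x\<bar>"]
    by (intro summable_mult summable_mult2) (simp add: sums_summable divide_inverse_commute)
  then have "summable (\<lambda>j. real (min j r) * (x ^ j / fact j * exp (- x)))"
    by (rule summable_comparison_test[rotated])
       (auto intro!: mult_right_mono divide_right_mono simp: abs_mult power_abs)
  then show ?thesis unfolding exp_min_pois_def by (rule summable_sums)
qed

lemma exp_min_pois_0 [simp]: "exp_min_pois x 0 = 0"
  by (simp add: exp_min_pois_def)

lemma exp_min_pois_Suc:
  "exp_min_pois x (Suc r) = exp_min_pois x r + 1 - poisson_less_prob (Suc r) x"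
proof -
  define b where "b j = x ^ j / fact j * exp (- x)" for j
  have "b sums (exp x * exp (- x))"
    unfolding b_def using exp_converges[of x] by (intro sums_mult2) (simp add: divide_inverse_commute)
  then have b: "b sums 1"
    by (simp add: exp_minus_inverse)
  have "(\<lambda>j. real (min j r) * b j + b j - (if j \<in> {..<Suc r} then b j else 0)) sums
          (exp_min_pois x r + 1 - (\<Sum>j<Suc r. b j))"
    using exp_min_pois_sums[of r x] unfolding b_def[symmetric]
    by (intro sums_diff sums_add b sums_If_finite_set) auto
  moreover have "real (min j r) * b j + b j - (if j \<in> {..<Suc r} then b j else 0) =
                 real (min j (Suc r)) * b j" for j
    by (auto simp: algebra_simps)
  ultimately have "(\<lambda>j. real (min j (Suc r)) * b j) sums
                     (exp_min_pois x r + 1 - (\<Sum>j<Suc r. b j))"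
    by simp
  moreover have "(\<Sum>j<Suc r. b j) = poisson_less_prob (Suc r) x"
    unfolding b_def poisson_less_prob_def sum_distrib_left by (simp add: algebra_simps)
  ultimately show ?thesis
    using exp_min_pois_sums[of "Suc r" x] unfolding b_def by (simp add: sums_iff)
qed

lemma exp_min_pois_at_0 [simp]: "exp_min_pois 0 r = 0"
proof -
  have "(\<lambda>j. real (min j r) * (0 ^ j / fact j * exp (- 0))) = (\<lambda>_. 0 :: real)"
    by (auto simp: fun_eq_iff power_0_left)
  then show ?thesis unfolding exp_min_pois_def by simp
qed

lemma has_real_derivative_exp_min_pois:
  "((\<lambda>x. exp_min_pois x r) has_real_derivative poisson_less_prob r x) (at x)"
proof (induction r)
  case 0
  then show ?case by (simp add: poisson_less_prob_def)
next
  case (Suc r)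
  have "poisson_less_prob r x + exp (- x) * x ^ r / fact r = poisson_less_prob (Suc r) x"
    by (simp add: poisson_less_prob_def algebra_simps)
  moreover have "((\<lambda>x. exp_min_pois x r + 1 - poisson_less_prob (Suc r) x) has_real_derivative
                   poisson_less_prob r x + 0 - - (exp (- x) * x ^ r / fact r)) (at x)"
    by (intro DERIV_diff DERIV_add Suc DERIV_const has_real_derivative_poisson_less_prob)
  ultimately show ?case by (simp add: exp_min_pois_Suc)
qed

text \<open>Concavity of \<open>x \<mapsto> exp_min_pois x r\<close> in tangent-line form.\<close>

lemma exp_min_pois_add_le:
  assumes "0 \<le> x" "0 \<le> h"
  shows "exp_min_pois (x + h) r \<le> exp_min_pois x r + h * poisson_less_prob r x"
proof -
  define g where "g t = exp_min_pois (x + t) r - t * poisson_less_prob r x" for t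
  have "g h \<le> g 0"
  proof (rule DERIV_nonpos_imp_nonincreasing[OF assms(2)])
    fix t assume t: "0 \<le> t" "t \<le> h"
    have "(g has_real_derivative poisson_less_prob r (x + t) - poisson_less_prob r x) (at t)"
      unfolding g_def
      by (auto intro!: derivative_eq_intros DERIV_chain2[OF has_real_derivative_exp_min_pois])
    moreover have "poisson_less_prob r (x + t) \<le> poisson_less_prob r x"
      using poisson_less_prob_antimono assms t by simp
    ultimately show "\<exists>d. (g has_real_derivative d) (at t) \<and> d \<le> 0"
      by force
  qed
  then show ?thesis
    by (simp add: g_def)
qed

lemma mult_poisson_less_prob_le_exp_min_pois:
  assumes "0 \<le> u"
  shows "u * poisson_less_prob r u \<le> exp_min_pois u r"
proof -
  define g where "g w = exp_min_pois w r - w * poisson_less_prob r u" for w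
  have "g 0 \<le> g u"
  proof (rule DERIV_nonneg_imp_nondecreasing[OF assms])
    fix t assume t: "0 \<le> t" "t \<le> u"
    have "(g has_real_derivative poisson_less_prob r t - poisson_less_prob r u) (at t)"
      unfolding g_def by (auto intro!: derivative_eq_intros has_real_derivative_exp_min_pois)
    moreover have "poisson_less_prob r u \<le> poisson_less_prob r t"
      using poisson_less_prob_antimono t by simp
    ultimately show "\<exists>d. (g has_real_derivative d) (at t) \<and> d \<ge> 0"
      by force
  qed
  then show ?thesis
    by (simp add: g_def)
qed

lemma exp_min_pois_le:
  assumes "0 \<le> x"
  shows "exp_min_pois x r \<le> x"
proof -
  have "exp_min_pois x r \<le> x * poisson_less_prob r 0"
    using exp_min_pois_add_le[of 0 x r] assms by simp
  also have "\<dots> \<le> x"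
    using poisson_less_prob_le_one[of 0 r] assms by (simp add: mult_left_le)
  finally show ?thesis .
qed

lemma exp_min_pois_scale_ge:
  assumes "0 \<le> t" "t \<le> 1" "0 \<le> x"
  shows "t * exp_min_pois x r \<le> exp_min_pois (t * x) r"
proof -
  define u where "u = t * x"
  have "0 \<le> u" "u \<le> x"
    using assms by (simp_all add: u_def mult_left_le_one_le)
  have "t * exp_min_pois x r \<le> t * (exp_min_pois u r + (x - u) * poisson_less_prob r u)"
    using exp_min_pois_add_le[of u "x - u" r] \<open>0 \<le> u\<close> \<open>u \<le> x\<close> assms(1)
    by (intro mult_left_mono) auto
  also have "\<dots> = t * exp_min_pois u r + (1 - t) * (u * poisson_less_prob r u)"
    by (simp add: u_def algebra_simps)
  also have "\<dots> \<le> t * exp_min_pois u r + (1 - t) * exp_min_pois u r"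
    using mult_poisson_less_prob_le_exp_min_pois[OF \<open>0 \<le> u\<close>] assms(2)
    by (intro add_left_mono mult_left_mono) auto
  finally show ?thesis by (simp add: u_def algebra_simps)
qed

definition subset_expectation :: "'a set \<Rightarrow> ('a \<Rightarrow> real) \<Rightarrow> ('a set \<Rightarrow> real) \<Rightarrow> real" where
  "subset_expectation N q f = (\<Sum>A\<in>Pow N. (\<Prod>i\<in>A. q i) * (\<Prod>i\<in>N - A. 1 - q i) * f A)"

lemma subset_expectation_empty [simp]: "subset_expectation {} q f = f {}"
  by (simp add: subset_expectation_def)

lemma subset_expectation_insert:
  assumes "finite N" "a \<notin> N"
  shows "subset_expectation (insert a N) q f =
           (1 - q a) * subset_expectation N q f + q a * subset_expectation N q (\<lambda>A. f (insert a A))"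
proof -
  let ?w = "\<lambda>N A. (\<Prod>i\<in>A. q i) * (\<Prod>i\<in>N - A. 1 - q i)"
  have inj: "inj_on (insert a) (Pow N)"
    using assms(2) by (auto simp: inj_on_def)
  have disj: "Pow N \<inter> insert a ` Pow N = {}"
    using assms(2) by auto
  have "subset_expectation (insert a N) q f =
          (\<Sum>A\<in>Pow N. ?w (insert a N) A * f A) +
          (\<Sum>A\<in>insert a ` Pow N. ?w (insert a N) A * f A)"
    unfolding subset_expectation_def Pow_insert using assms(1) disj by (simp add: sum.union_disjoint)
  also have "(\<Sum>A\<in>insert a ` Pow N. ?w (insert a N) A * f A) =
               (\<Sum>A\<in>Pow N. ?w (insert a N) (insert a A) * f (insert a A))"
    by (simp add: sum.reindex[OF inj])
  also have "(\<Sum>A\<in>Pow N. ?w (insert a N) A * f A) = (\<Sum>A\<in>Pow N. (1 - q a) * (?w N A * f A))"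
  proof (rule sum.cong)
    fix A assume "A \<in> Pow N"
    then have "insert a N - A = insert a (N - A)" "a \<notin> N - A"
      using assms(2) by auto
    then show "?w (insert a N) A * f A = (1 - q a) * (?w N A * f A)"
      using assms(1) by simp
  qed simp
  also have "(\<Sum>A\<in>Pow N. ?w (insert a N) (insert a A) * f (insert a A)) =
             (\<Sum>A\<in>Pow N. q a * (?w N A * f (insert a A)))"
  proof (rule sum.cong)
    fix A assume "A \<in> Pow N"
    then have "insert a N - insert a A = N - A" "finite A" "a \<notin> A"
      using assms by (auto dest: finite_subset)
    then show "?w (insert a N) (insert a A) * f (insert a A) = q a * (?w N A * f (insert a A))"
      by simp
  qed simp
  finally show ?thesis
    unfolding subset_expectation_def by (simp add: sum_distrib_left)
qed

lemma subset_expectation_cong: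
  "(\<And>A. A \<subseteq> N \<Longrightarrow> f A = g A) \<Longrightarrow> subset_expectation N q f = subset_expectation N q g"
  unfolding subset_expectation_def by (rule sum.cong) auto

lemma subset_expectation_add:
  "subset_expectation N q (\<lambda>A. f A + g A) = subset_expectation N q f + subset_expectation N q g"
  unfolding subset_expectation_def by (simp add: sum.distrib algebra_simps)

lemma subset_expectation_cmult:
  "subset_expectation N q (\<lambda>A. c * f A) = c * subset_expectation N q f"
  unfolding subset_expectation_def by (simp add: sum_distrib_left algebra_simps)

lemma subset_expectation_const:
  "finite N \<Longrightarrow> subset_expectation N q (\<lambda>A. c) = c"
  by (induction N rule: finite_induct) (simp_all add: subset_expectation_insert algebra_simps)

lemma subset_expectation_sum:
  "finite N \<Longrightarrow> subset_expectation N q (\<lambda>A. \<Sum>i\<in>A. u i) = (\<Sum>i\<in>N. u i * q i)"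
proof (induction N rule: finite_induct)
  case (insert a N)
  have "subset_expectation N q (\<lambda>A. \<Sum>i\<in>insert a A. u i) =
          subset_expectation N q (\<lambda>A. u a + (\<Sum>i\<in>A. u i))"
    using insert by (intro subset_expectation_cong) (auto dest: finite_subset intro!: sum.insert)
  also have "\<dots> = u a + subset_expectation N q (\<lambda>A. \<Sum>i\<in>A. u i)"
    by (simp add: subset_expectation_add subset_expectation_const insert.hyps)
  finally show ?case
    using insert by (simp add: subset_expectation_insert algebra_simps)
qed simp

lemma subset_expectation_thinning:
  "finite N \<Longrightarrow>
     subset_expectation N y (\<lambda>S. subset_expectation S p f) = subset_expectation N (\<lambda>i. y i * p i) f"
proof (induction N arbitrary: f rule: finite_induct)
  case (insert a N)
  have "subset_expectation N y (\<lambda>S. subset_expectation (insert a S) p f) =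
          subset_expectation N y (\<lambda>S. (1 - p a) * subset_expectation S p f +
                                         p a * subset_expectation S p (\<lambda>A. f (insert a A)))"
    using insert by (intro subset_expectation_cong subset_expectation_insert) (auto dest: finite_subset)
  also have "\<dots> = (1 - p a) * subset_expectation N (\<lambda>i. y i * p i) f +
                   p a * subset_expectation N (\<lambda>i. y i * p i) (\<lambda>A. f (insert a A))"
    by (simp add: subset_expectation_add subset_expectation_cmult insert.IH)
  finally have insert_step:
    "subset_expectation N y (\<lambda>S. subset_expectation (insert a S) p f) = \<dots>" .
  show ?case
    using insert.hyps by (simp add: subset_expectation_insert insert_step insert.IH algebra_simps)
qed simp

lemma exp_min_pois_le_subset_expectation:
  assumes "finite N" "\<forall>i\<in>N. 0 \<le> q i \<and> q i \<le> 1"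
  shows "exp_min_pois (\<Sum>i\<in>N. q i) r \<le> subset_expectation N q (\<lambda>A. real (min (card A) r))"
  using assms
proof (induction N arbitrary: r rule: finite_induct)
  case (insert a N)
  define \<mu> where "\<mu> = (\<Sum>i\<in>N. q i)"
  have qa: "0 \<le> q a" "q a \<le> 1"
    using insert.prems by auto
  have "0 \<le> \<mu>"
    unfolding \<mu>_def using insert.prems by (auto intro: sum_nonneg)
  show ?case
  proof (cases r)
    case 0
    then show ?thesis by (simp add: subset_expectation_const insert.hyps)
  next
    case (Suc r')
    have card_insert: "subset_expectation N q (\<lambda>A. real (min (card (insert a A)) r)) =
                         1 + subset_expectation N q (\<lambda>A. real (min (card A) r'))"
    proof -
      have "subset_expectation N q (\<lambda>A. real (min (card (insert a A)) r)) =
              subset_expectation N q (\<lambda>A. 1 + real (min (card A) r'))"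
      proof (rule subset_expectation_cong)
        fix A assume "A \<subseteq> N"
        then have "card (insert a A) = Suc (card A)"
          using insert.hyps finite_subset by (subst card_insert_disjoint) auto
        then show "real (min (card (insert a A)) r) = 1 + real (min (card A) r')"
          using Suc by simp
      qed
      then show ?thesis
        by (simp add: subset_expectation_add subset_expectation_const insert.hyps)
    qed
    \<comment> \<open>Since \<open>P(Pois \<mu> < r) = 1 + exp_min_pois \<mu> r' - exp_min_pois \<mu> r\<close>, the tangent bound
      has exactly the shape of the recursion that adding the Bernoulli summand \<open>a\<close> produces.\<close>
    have "exp_min_pois (\<Sum>i\<in>insert a N. q i) r = exp_min_pois (\<mu> + q a) r"
      using insert.hyps by (simp add: \<mu>_def add.commute)
    also have "\<dots> \<le> exp_min_pois \<mu> r + q a * poisson_less_prob r \<mu>"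
      using exp_min_pois_add_le[OF \<open>0 \<le> \<mu>\<close> qa(1)] .
    also have "\<dots> = (1 - q a) * exp_min_pois \<mu> r + q a * (1 + exp_min_pois \<mu> r')"
      using Suc by (simp add: exp_min_pois_Suc algebra_simps)
    also have "\<dots> \<le> (1 - q a) * subset_expectation N q (\<lambda>A. real (min (card A) r)) +
                     q a * (1 + subset_expectation N q (\<lambda>A. real (min (card A) r')))"
      using qa insert.IH insert.prems unfolding \<mu>_def by (intro add_mono mult_left_mono) auto
    also have "\<dots> = subset_expectation (insert a N) q (\<lambda>A. real (min (card A) r))"
      using insert.hyps card_insert by (simp add: subset_expectation_insert)
    finally show ?thesis .
  qed
qed simp

lemma subset_expectation_min_card_ge:
  assumes "finite N" "\<forall>i\<in>N. 0 \<le> q i \<and> q i \<le> 1" "(\<Sum>i\<in>N. q i) = s * m"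
    and "0 \<le> s" "0 \<le> m" "m \<le> real r" "0 < r"
  shows "m / real r * exp_min_pois (s * real r) r \<le>
           subset_expectation N q (\<lambda>A. real (min (card A) r))"
proof -
  have "m / real r * exp_min_pois (s * real r) r \<le> exp_min_pois (m / real r * (s * real r)) r"
    using assms by (intro exp_min_pois_scale_ge) auto
  also have "m / real r * (s * real r) = (\<Sum>i\<in>N. q i)"
    using assms(3,7) by simp
  also have "exp_min_pois (\<Sum>i\<in>N. q i) r \<le>
               subset_expectation N q (\<lambda>A. real (min (card A) r))"
    using exp_min_pois_le_subset_expectation assms(1,2) .
  finally show ?thesis .
qed

lemma indep_offer_reward_eq:
  "indep_offer_reward n k p v y' =
     (\<Sum>i=1..n. (v i - 1) * (y' i * p i)) +
     subset_expectation {1..n} (\<lambda>i. y' i * p i) (\<lambda>A. real (min (card A) k))"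
proof -
  have reward: "reward k v A = (\<Sum>i\<in>A. v i - 1) + real (min (card A) k)" for A
    unfolding reward_def sum_subtractf by (auto simp: max_def min_def)
  have "indep_offer_reward n k p v y' =
          subset_expectation {1..n} y' (\<lambda>S. subset_expectation S p (reward k v))"
    unfolding indep_offer_reward_def subset_expectation_def subset_prob_def by simp
  also have "\<dots> = subset_expectation {1..n} (\<lambda>i. y' i * p i) (reward k v)"
    by (simp add: subset_expectation_thinning)
  finally show ?thesis
    unfolding reward subset_expectation_add by (simp add: subset_expectation_sum)
qed

lemma LP_sim_eq_LP_obj:
  assumes "\<forall>i\<in>{1..n}. 0 \<le> p i \<and> 0 \<le> v i"
    and "LP_feasible n k p y z" "LP_obj n p v y z = LP_sim n k p v"
    and "(\<Sum>i=1..n. y i * p i) \<le> real k"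
  shows "LP_sim n k p v = (\<Sum>i=1..n. v i * p i * y i)"
proof -
  have "bdd_above {LP_obj n p v y z | y z. LP_feasible n k p y z}"
  proof (rule bdd_aboveI)
    fix x assume "x \<in> {LP_obj n p v y z | y z. LP_feasible n k p y z}"
    then obtain y2 z2 where x: "x = LP_obj n p v y2 z2" and feasible: "LP_feasible n k p y2 z2"
      by blast
    have "x \<le> (\<Sum>i=1..n. v i * p i * y2 i)"
      using feasible unfolding x LP_obj_def LP_feasible_def by simp
    also have "\<dots> \<le> (\<Sum>i=1..n. v i * p i)"
      using feasible assms(1) unfolding LP_feasible_def by (intro sum_mono) (simp add: mult_left_le)
    finally show "x \<le> (\<Sum>i=1..n. v i * p i)" .
  qed
  moreover have "LP_feasible n k p y 0"
    using assms(2,4) unfolding LP_feasible_def by (simp add: mult.commute)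
  ultimately have "LP_obj n p v y 0 \<le> LP_sim n k p v"
    unfolding LP_sim_def by (intro cSup_upper) blast+
  then show ?thesis
    using assms(2,3) unfolding LP_obj_def LP_feasible_def by simp
qed

lemma sum_mult_nonneg_single_crossing:
  fixes v d :: "nat \<Rightarrow> real"
  assumes "j \<in> N" "(\<Sum>i\<in>N. d i) = 0"
    and "\<And>i. i \<in> N \<Longrightarrow> i < j \<Longrightarrow> 0 \<le> d i \<and> v j \<le> v i"
    and "\<And>i. i \<in> N \<Longrightarrow> j < i \<Longrightarrow> d i \<le> 0 \<and> v i \<le> v j"
  shows "0 \<le> (\<Sum>i\<in>N. v i * d i)"
proof -
  have "(\<Sum>i\<in>N. v j * d i) \<le> (\<Sum>i\<in>N. v i * d i)"
  proof (rule sum_mono)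
    fix i assume i: "i \<in> N"
    consider "i < j" | "i = j" | "j < i"
      by linarith
    then show "v j * d i \<le> v i * d i"
      by cases (use assms(3,4)[OF i] in \<open>auto intro: mult_right_mono mult_right_mono_neg\<close>)
  qed
  then show ?thesis
    using assms(2) by (simp add: sum_distrib_left[symmetric])
qed

lemma threshold_form_bounds:
  assumes "threshold_form n y'" "i \<in> {1..n}"
  shows "0 \<le> y' i \<and> y' i \<le> 1"
  using assms unfolding threshold_form_def by (metis linorder_neqE_nat order_refl zero_le_one)

lemma threshold_offer_value_ge:
  assumes p: "\<forall>i\<in>{1..n}. 0 \<le> p i"
    and v: "\<forall>i\<in>{1..n}. \<forall>j\<in>{1..n}. i \<le> j \<longrightarrow> v j \<le> v i"
    and y: "\<forall>i\<in>{1..n}. 0 \<le> y i \<and> y i \<le> 1"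
    and s: "0 \<le> s" "s \<le> 1"
    and "threshold_form n y'"
    and mass: "(\<Sum>i=1..n. y' i * p i) = s * (\<Sum>i=1..n. y i * p i)"
  shows "s * (\<Sum>i=1..n. v i * p i * y i) \<le> (\<Sum>i=1..n. v i * (y' i * p i))"
proof -
  obtain j where j: "j \<in> {1..n}"
    and below: "\<And>i. i \<in> {1..n} \<Longrightarrow> i < j \<Longrightarrow> y' i = 1"
    and above: "\<And>i. i \<in> {1..n} \<Longrightarrow> j < i \<Longrightarrow> y' i = 0"
    using \<open>threshold_form n y'\<close> unfolding threshold_form_def by blast
  have "0 \<le> (\<Sum>i=1..n. v i * (y' i * p i - s * (y i * p i)))"
  proof (rule sum_mult_nonneg_single_crossing[OF j])
    show "(\<Sum>i=1..n. y' i * p i - s * (y i * p i)) = 0"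
      using mass by (simp add: sum_subtractf sum_distrib_left)
  next
    fix i assume i: "i \<in> {1..n}" "i < j"
    have "s * (y i * p i) \<le> 1 * (1 * p i)"
      using s y p i by (intro mult_mono) auto
    then show "0 \<le> y' i * p i - s * (y i * p i) \<and> v j \<le> v i"
      using below[OF i] v i j by simp
  next
    fix i assume i: "i \<in> {1..n}" "j < i"
    have "0 \<le> s * (y i * p i)"
      using s y p i by simp
    then show "y' i * p i - s * (y i * p i) \<le> 0 \<and> v i \<le> v j"
      using above[OF i] v i j by simp
  qed
  then show ?thesis
    by (simp add: algebra_simps sum_subtractf sum_distrib_left)
qed

lemma tau_bounded_mass_le:
  assumes "tau_bounded n v \<tau>" "\<forall>i\<in>{1..n}. 0 \<le> y i * p i"
  shows "\<tau> * (\<Sum>i=1..n. y i * p i) \<le> (\<Sum>i=1..n. v i * p i * y i)"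
  unfolding sum_distrib_left
proof (rule sum_mono)
  fix i assume "i \<in> {1..n}"
  then have "\<tau> * (y i * p i) \<le> v i * (y i * p i)"
    using assms unfolding tau_bounded_def by (intro mult_right_mono) auto
  then show "\<tau> * (y i * p i) \<le> v i * p i * y i"
    by (simp add: algebra_simps)
qed

lemma indep_offer_reward_ge:
  assumes "valid_instance n k p v" "0 \<le> s" "s \<le> 1"
    and y: "\<forall>i\<in>{1..n}. 0 \<le> y i \<and> y i \<le> 1" and "(\<Sum>i=1..n. y i * p i) \<le> real k"
    and "threshold_form n y'" and mass: "(\<Sum>i=1..n. y' i * p i) = s * (\<Sum>i=1..n. y i * p i)"
  shows "s * (\<Sum>i=1..n. v i * p i * y i) - s * (\<Sum>i=1..n. y i * p i) +
           (\<Sum>i=1..n. y i * p i) / real k * exp_min_pois (s * real k) k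
         \<le> indep_offer_reward n k p v y'"
proof -
  from assms(1) have k: "0 < k" and p: "\<forall>i\<in>{1..n}. 0 \<le> p i \<and> p i \<le> 1"
    and v: "\<forall>i\<in>{1..n}. \<forall>j\<in>{1..n}. i \<le> j \<longrightarrow> v j \<le> v i"
    unfolding valid_instance_def by auto
  have "0 \<le> (\<Sum>i=1..n. y i * p i)"
    using y p by (auto intro: sum_nonneg)
  then have "(\<Sum>i=1..n. y i * p i) / real k * exp_min_pois (s * real k) k
               \<le> subset_expectation {1..n} (\<lambda>i. y' i * p i) (\<lambda>A. real (min (card A) k))"
    using threshold_form_bounds[OF \<open>threshold_form n y'\<close>] assms(2,5) p k mass
    by (intro subset_expectation_min_card_ge) (auto simp: mult_le_one)
  moreover have "s * (\<Sum>i=1..n. v i * p i * y i) \<le> (\<Sum>i=1..n. v i * (y' i * p i))"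
    using p v y assms(2,3,6) mass by (intro threshold_offer_value_ge) auto
  ultimately show ?thesis
    using mass by (simp add: indep_offer_reward_eq algebra_simps sum_subtractf)
qed

theorem lemma6p4:
  fixes n k :: nat and p v y y' :: "nat \<Rightarrow> real" and s \<tau> :: real
  assumes "valid_instance n k p v"
    and "0 \<le> s" and "s \<le> 1"
    and "0 < \<tau>" and "\<tau> < 1"
    and "tau_bounded n v \<tau>"
    and "(\<Sum>i\<in>V_high n v. p i) \<le> real k"
    and "ALG_sim_choice s n k p v y y'"
  shows "indep_offer_reward n k p v y' \<ge>
    (s - s / \<tau> + exp_min_pois (s * real k) k / (\<tau> * real k)) * LP_sim n k p v"
proof -
  from assms(8) obtain z where feasible: "LP_feasible n k p y z"
    and optimal: "LP_obj n p v y z = LP_sim n k p v"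
    and mass: "(\<Sum>i=1..n. y i * p i) = target_mass n k p v" and "threshold_form n y'"
    and mass': "(\<Sum>i=1..n. y' i * p i) = s * (\<Sum>i=1..n. y i * p i)"
    unfolding ALG_sim_choice_def by blast
  have pv: "\<forall>i\<in>{1..n}. 0 \<le> p i \<and> 0 \<le> v i" and k: "0 < real k"
    using assms(1) unfolding valid_instance_def by auto
  have y: "\<forall>i\<in>{1..n}. 0 \<le> y i \<and> y i \<le> 1"
    using feasible unfolding LP_feasible_def by blast
  have mass_le: "(\<Sum>i=1..n. y i * p i) \<le> real k"
    using mass assms(7) unfolding target_mass_def by simp
  define m where "m = (\<Sum>i=1..n. y i * p i)"
  define W where "W = (\<Sum>i=1..n. v i * p i * y i)"
  define c where "c = exp_min_pois (s * real k) k"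
  have "\<tau> * m \<le> W"
    unfolding m_def W_def using assms(6) y pv by (intro tau_bounded_mass_le) auto
  have "c \<le> s * real k"
    unfolding c_def using assms(2) k by (intro exp_min_pois_le) simp
  have "(s - s / \<tau> + c / (\<tau> * real k)) * LP_sim n k p v =
          s * W - s * m + m / real k * c - (s - c / real k) * (W / \<tau> - m)"
    using LP_sim_eq_LP_obj[OF _ feasible optimal mass_le] pv assms(4) k
    unfolding W_def by (simp add: field_simps)
  also have "\<dots> \<le> s * W - s * m + m / real k * c"
    using \<open>c \<le> s * real k\<close> \<open>\<tau> * m \<le> W\<close> assms(4) k
    by (simp, intro mult_nonneg_nonneg) (simp_all add: field_simps)
  also have "\<dots> \<le> indep_offer_reward n k p v y'"
    unfolding W_def m_def c_def using assms y mass_le \<open>threshold_form n y'\<close> mass'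
    by (intro indep_offer_reward_ge) auto
  finally show ?thesis
    unfolding c_def .
qed

end
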